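(* Let $d\ge2$, $\bm\alpha=(\alpha_1,\dots,\alpha_d)\in(0,1)^d$, and let $C^{\mathrm{MO}}_{\bm\alpha}(\bm u)=\left(\prod_{j=1}^d u_j^{1-\alpha_j}\right)\min_{1\le j\le d}\{u_j^{\alpha_j}\}$, $\bm u\in[0,1]^d$, be the Marshall--Olkin copula, with survival copula $\hat C^{\mathrm{MO}}_{\bm\alpha}$. Then: (i) $\hat C^{\mathrm{MO}}_{\bm\alpha}$ admits the tail copula $\Lambda(\bm x;\hat C^{\mathrm{MO}}_{\bm\alpha})=\min_{1\le j\le d}\{\alpha_jx_j\}$, $\bm x\in(0,\infty)^d$. (ii) $\lambda^\ast(\hat C^{\mathrm{MO}}_{\bm\alpha})=\prod_{j=1}^d\alpha_j^{1/d}$. (iii) The maximizer of $\bm b\mapsto\Lambda(\bm b;\hat C^{\mathrm{MO}}_{\bm\alpha})$ over $\mathcal B$ is unique and equals $\bm b^\ast=\left(\frac{\prod_{j=1}^d\alpha_j^{1/d}}{\alpha_1},\dots,\frac{\prod_{j=1}^d\alpha_j^{1/d}}{\alpha_d}\right)\in\mathcal B$.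
   Context: For a $d$-dimensional copula $C$ and $\bm U\sim C$, the survival copula $\hat C$ is the distribution function of $(1-U_1,\dots,1-U_d)$. The (lower) tail copula of a copula $C$ is $\Lambda(\bm x;C)=\lim_{t\downarrow0}C(t\bm x)/t$, $\bm x\in(0,\infty)^d$, when the limit exists. Let $\mathcal B=\{\bm b\in(0,\infty)^d:\prod_{j=1}^d b_j=1\}$ and define the maximal tail concordance measure $\lambda^\ast(C)=\sup_{\bm b\in\mathcal B}\Lambda(\bm b;C)$. *)

theory Defs
  imports "HOL-Analysis.Analysis" "HOL-Probability.Probability"
begin

text \<open>Points of (0,1)^d etc. are vectors in real^'d; the dimension d is CARD('d).\<close>

definition unit_cube :: "(real^'d) set" where
  "unit_cube = {u. \<forall>j. 0 \<le> u$j \<and> u$j \<le> 1}"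

definition MO_copula :: "real^'d \<Rightarrow> real^'d \<Rightarrow> real" where
  "MO_copula \<alpha> u = (\<Prod>j\<in>UNIV. u$j powr (1 - \<alpha>$j)) * Min (range (\<lambda>j. u$j powr (\<alpha>$j)))"

definition cdf_vec :: "(real^'d) measure \<Rightarrow> real^'d \<Rightarrow> real" where
  "cdf_vec M u = measure M {x. \<forall>j. x$j \<le> u$j}"

text \<open>If M is the law of U, the survival copula is the cdf of (1-U_1,...,1-U_d).\<close>
definition survival_cdf :: "(real^'d) measure \<Rightarrow> real^'d \<Rightarrow> real" where
  "survival_cdf M u = measure M {x. \<forall>j. 1 - x$j \<le> u$j}"

definition tail_copula :: "(real^'d \<Rightarrow> real) \<Rightarrow> real^'d \<Rightarrow> real" where
  "tail_copula C x = Lim (at_right 0) (\<lambda>t. C (t *\<^sub>R x) / t)"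

definition calB :: "(real^'d) set" where
  "calB = {b. (\<forall>j. 0 < b$j) \<and> (\<Prod>j\<in>UNIV. b$j) = 1}"

definition max_tail_concordance :: "(real^'d \<Rightarrow> real) \<Rightarrow> real" where
  "max_tail_concordance C = (SUP b\<in>calB. tail_copula C b)"

end

theory Submission
  imports Defs
begin

(* The survival copula at u is, by inclusion-exclusion over the coordinates (the margins are
   uniform, hence atomless), the alternating sum over nonempty B of 1 - C(1 - u_B), where 1 - u_B
   lowers only the coordinates in B.  At u = t x the Marshall-Olkin copula satisfies
   1 - C(1 - t x_B) = t (sum_{j in B} (1 - alpha_j) x_j + max_{j in B} alpha_j x_j) + o(t).
   In the alternating sum the additive part cancels because d >= 2, and the maxima add up to
   min_j alpha_j x_j by the maximum-minimum identity; this is the tail copula.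
   For b in calB the numbers alpha_j b_j have product prod_j alpha_j, so their minimum is at most
   the geometric mean of alpha, with equality exactly when all alpha_j b_j coincide, i.e. b = b*. *)

section \<open>Alternating sums over nonempty subsets\<close>

lemma sum_alternating_nonempty_subsets:
  assumes "finite I" "I \<noteq> {}"
  shows "(\<Sum>B | B \<subseteq> I \<and> B \<noteq> {}. (-1) ^ (card B + 1)) = (1::'a::ring_1)"
proof -
  have "(1::'a) = of_nat (card (\<Union>i\<in>I. {()}))"
    using assms by simp
  also have "\<dots> = (\<Sum>B | B \<subseteq> I \<and> B \<noteq> {}. (-1) ^ (card B + 1) * of_nat (card (\<Inter>i\<in>B. {()})))"
    by (rule Incl_Excl_UN) (auto simp: assms card_Un_disjnt)
  also have "\<dots> = (\<Sum>B | B \<subseteq> I \<and> B \<noteq> {}. (-1) ^ (card B + 1))"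
    by (intro sum.cong) auto
  finally show ?thesis ..
qed

lemma sum_alternating_subsets_containing:
  assumes "finite I" "j \<in> I" "I \<noteq> {j}"
  shows "(\<Sum>B | B \<subseteq> I \<and> j \<in> B. (-1) ^ (card B + 1)) = (0::'a::ring_1)"
proof -
  let ?s = "\<lambda>B. (-1) ^ (card B + 1) :: 'a"
  have split: "{B. B \<subseteq> I \<and> B \<noteq> {}} = {B. B \<subseteq> I \<and> j \<in> B} \<union> {B. B \<subseteq> I - {j} \<and> B \<noteq> {}}"
    using assms(2) by auto
  have "(1::'a) = (\<Sum>B | B \<subseteq> I \<and> B \<noteq> {}. ?s B)"
    using assms by (intro sum_alternating_nonempty_subsets[symmetric]) auto
  also have "\<dots> = (\<Sum>B | B \<subseteq> I \<and> j \<in> B. ?s B) + (\<Sum>B | B \<subseteq> I - {j} \<and> B \<noteq> {}. ?s B)"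
    unfolding split using assms(1) by (intro sum.union_disjoint) auto
  also have "(\<Sum>B | B \<subseteq> I - {j} \<and> B \<noteq> {}. ?s B) = 1"
    using assms by (intro sum_alternating_nonempty_subsets) auto
  finally show ?thesis by simp
qed

lemma sum_alternating_nonempty_subsets_sum:
  fixes w :: "'i \<Rightarrow> 'a::comm_ring_1"
  assumes "finite I" "card I \<ge> 2"
  shows "(\<Sum>B | B \<subseteq> I \<and> B \<noteq> {}. (-1) ^ (card B + 1) * sum w B) = 0"
proof -
  let ?s = "\<lambda>B. (-1) ^ (card B + 1) :: 'a"
  have "(\<Sum>B | B \<subseteq> I \<and> B \<noteq> {}. ?s B * sum w B)
      = (\<Sum>B | B \<subseteq> I \<and> B \<noteq> {}. \<Sum>j | j \<in> I \<and> j \<in> B. ?s B * w j)"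
    by (intro sum.cong refl) (auto simp: sum_distrib_left intro!: sum.cong)
  also have "\<dots> = (\<Sum>j\<in>I. \<Sum>B | B \<in> {B. B \<subseteq> I \<and> B \<noteq> {}} \<and> j \<in> B. ?s B * w j)"
    using assms(1) by (subst sum.swap_restrict) auto
  also have "\<dots> = (\<Sum>j\<in>I. w j * (\<Sum>B | B \<subseteq> I \<and> j \<in> B. ?s B))"
    by (auto simp: sum_distrib_left mult.commute intro!: sum.cong arg_cong[where f="\<lambda>A. sum _ A"])
  also have "\<dots> = 0"
  proof (intro sum.neutral ballI)
    fix j assume "j \<in> I"
    moreover from assms have "I \<noteq> {j}" by auto
    ultimately show "w j * (\<Sum>B | B \<subseteq> I \<and> j \<in> B. ?s B) = 0"
      using assms(1) sum_alternating_subsets_containing[of I j] by (metis mult_zero_right)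
  qed
  finally show ?thesis .
qed

lemma Min_eq_alternating_sum_Max:
  fixes y :: "'i \<Rightarrow> real"
  assumes fin: "finite I" and ne: "I \<noteq> {}"
  shows "Min (y ` I) = (\<Sum>B | B \<subseteq> I \<and> B \<noteq> {}. (-1) ^ (card B + 1) * Max (y ` B))"
proof -
  define L where "L = Min (y ` I)"
  define K where "K = Max (y ` I)"
  have LK: "L \<le> y j" "y j \<le> K" if "j \<in> I" for j
    using that fin by (auto simp: L_def K_def)
  have Max_le_K: "Max (y ` B) \<le> K" if "B \<subseteq> I" "B \<noteq> {}" for B
    using that fin LK by (auto simp: finite_subset)
  (* inclusion-exclusion for the lengths of the intervals [y j, K] *)
  interpret Incl_Excl "\<lambda>S. S \<in> sets lborel \<and> S \<subseteq> {L..K}" "measure lborel"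
  proof
    fix S T :: "real set"
    assume "S \<in> sets lborel \<and> S \<subseteq> {L..K}" "T \<in> sets lborel \<and> T \<subseteq> {L..K}" "disjnt S T"
    moreover have "emeasure lborel S \<noteq> \<infinity>" "emeasure lborel T \<noteq> \<infinity>"
      using calculation emeasure_mono[of S "{L..K}" lborel] emeasure_mono[of T "{L..K}" lborel]
      by (auto simp: top_unique emeasure_lborel_Icc_eq)
    ultimately show "measure lborel (S \<union> T) = measure lborel S + measure lborel T"
      by (intro measure_Union) (auto simp: disjnt_def)
  qed auto
  have Union_intervals: "(\<Union>j\<in>I. {y j..K}) = {L..K}"
  proof -
    have "L \<in> y ` I"
      using fin ne by (simp add: L_def)
    then obtain k where "k \<in> I" "y k = L" by auto
    then show ?thesis using LK by fastforce
  qed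
  have Inter_intervals: "(\<Inter>j\<in>B. {y j..K}) = {Max (y ` B)..K}" if "B \<subseteq> I" "B \<noteq> {}" for B
  proof -
    have "finite B" using that fin finite_subset by blast
    with that(2) have "z \<in> (\<Inter>j\<in>B. {y j..K}) \<longleftrightarrow> z \<in> {Max (y ` B)..K}" for z
      by (simp add: Max_le_iff) blast
    then show ?thesis by blast
  qed
  have "K - L = measure lborel (\<Union>j\<in>I. {y j..K})"
    using ne LK order_trans by (fastforce simp: Union_intervals)
  also have "\<dots> = (\<Sum>B | B \<subseteq> I \<and> B \<noteq> {}. (-1) ^ (card B + 1) * measure lborel (\<Inter>j\<in>B. {y j..K}))"
    using LK by (intro restricted_indexed fin) auto
  also have "\<dots> = (\<Sum>B | B \<subseteq> I \<and> B \<noteq> {}. (-1) ^ (card B + 1) * (K - Max (y ` B)))"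
    by (intro sum.cong refl) (simp add: Inter_intervals Max_le_K)
  also have "\<dots> = K * (\<Sum>B | B \<subseteq> I \<and> B \<noteq> {}. (-1) ^ (card B + 1))
      - (\<Sum>B | B \<subseteq> I \<and> B \<noteq> {}. (-1) ^ (card B + 1) * Max (y ` B))"
    by (simp add: sum_distrib_left right_diff_distrib sum_subtractf sum_negf mult_ac)
  also have "\<dots> = K - (\<Sum>B | B \<subseteq> I \<and> B \<noteq> {}. (-1) ^ (card B + 1) * Max (y ` B))"
    by (subst sum_alternating_nonempty_subsets[OF fin ne]) simp
  finally show ?thesis
    by (simp add: L_def)
qed

section \<open>Right slopes at zero\<close>

lemma slope_tendsto_imp_tendsto_1:
  fixes f :: "real \<Rightarrow> real"
  assumes "((\<lambda>t. (f t - 1) / t) \<longlongrightarrow> d) (at_right 0)"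
  shows "(f \<longlongrightarrow> 1) (at_right 0)"
proof -
  have "((\<lambda>t. 1 + t * ((f t - 1) / t)) \<longlongrightarrow> 1 + 0 * d) (at_right 0)"
    by (intro tendsto_intros assms)
  moreover have "\<forall>\<^sub>F t in at_right 0. 1 + t * ((f t - 1) / t) = f t"
    using eventually_at_right_less[of "0::real"] by eventually_elim simp
  ultimately show ?thesis
    by (simp add: tendsto_cong)
qed

lemma slope_powr:
  fixes c a :: real
  shows "((\<lambda>t. ((1 - t * c) powr a - 1) / t) \<longlongrightarrow> - (a * c)) (at_right 0)"
proof -
  have "((\<lambda>t. (1 - t * c) powr a) has_real_derivative a * (1 - 0 * c) powr (a - of_nat 1) * - c) (at 0)"
    by (rule DERIV_fun_powr) (auto intro!: derivative_eq_intros)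
  then have "((\<lambda>t. ((1 - t * c) powr a - 1) / t) \<longlongrightarrow> - (a * c)) (at 0)"
    by (simp add: has_field_derivative_iff)
  then show ?thesis
    by (rule filterlim_mono) (simp_all add: at_le)
qed

lemma slope_mult:
  fixes f g :: "real \<Rightarrow> real"
  assumes f: "((\<lambda>t. (f t - 1) / t) \<longlongrightarrow> p) (at_right 0)"
    and g: "((\<lambda>t. (g t - 1) / t) \<longlongrightarrow> q) (at_right 0)"
  shows "((\<lambda>t. (f t * g t - 1) / t) \<longlongrightarrow> p + q) (at_right 0)"
proof -
  have "((\<lambda>t. (f t - 1) / t * g t + (g t - 1) / t) \<longlongrightarrow> p * 1 + q) (at_right 0)"
    by (intro tendsto_intros f g slope_tendsto_imp_tendsto_1[OF g])
  moreover have "(f t - 1) / t * g t + (g t - 1) / t = (f t * g t - 1) / t" for t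
    by (simp add: diff_divide_distrib add_divide_distrib algebra_simps)
  ultimately show ?thesis by simp
qed

lemma slope_prod:
  fixes f :: "'i \<Rightarrow> real \<Rightarrow> real"
  assumes "finite I" "\<And>i. i \<in> I \<Longrightarrow> ((\<lambda>t. (f i t - 1) / t) \<longlongrightarrow> d i) (at_right 0)"
  shows "((\<lambda>t. ((\<Prod>i\<in>I. f i t) - 1) / t) \<longlongrightarrow> (\<Sum>i\<in>I. d i)) (at_right 0)"
  using assms by (induction I rule: finite_induct) (simp_all add: slope_mult)

lemma tendsto_Min:
  fixes f :: "'i \<Rightarrow> 'a \<Rightarrow> 'b::{linorder_topology}"
  assumes "finite I" "I \<noteq> {}" "\<And>i. i \<in> I \<Longrightarrow> (f i \<longlongrightarrow> l i) F"
  shows "((\<lambda>x. Min ((\<lambda>i. f i x) ` I)) \<longlongrightarrow> Min (l ` I)) F"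
  using assms by (induction I rule: finite_ne_induct) (simp_all add: tendsto_min)

lemma slope_Min:
  fixes f :: "'i \<Rightarrow> real \<Rightarrow> real"
  assumes "finite I" "I \<noteq> {}" "\<And>i. i \<in> I \<Longrightarrow> ((\<lambda>t. (f i t - 1) / t) \<longlongrightarrow> d i) (at_right 0)"
  shows "((\<lambda>t. (Min ((\<lambda>i. f i t) ` I) - 1) / t) \<longlongrightarrow> Min (d ` I)) (at_right 0)"
proof -
  have "((\<lambda>t. Min ((\<lambda>i. (f i t - 1) / t) ` I)) \<longlongrightarrow> Min (d ` I)) (at_right 0)"
    using assms by (rule tendsto_Min)
  moreover have "\<forall>\<^sub>F t in at_right 0. Min ((\<lambda>i. (f i t - 1) / t) ` I) = (Min ((\<lambda>i. f i t) ` I) - 1) / t"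
    using eventually_at_right_less[of "0::real"]
  proof eventually_elim
    case (elim t)
    have "mono (\<lambda>z. (z - 1) / t)"
      using elim by (auto intro!: monoI divide_right_mono)
    then have "(Min ((\<lambda>i. f i t) ` I) - 1) / t = Min ((\<lambda>z. (z - 1) / t) ` (\<lambda>i. f i t) ` I)"
      by (rule mono_Min_commute) (use assms in auto)
    then show ?case
      by (simp add: image_image)
  qed
  ultimately show ?thesis by (simp add: tendsto_cong)
qed

section \<open>Survival functions by inclusion-exclusion\<close>

lemma AE_le_1_if_cdf_vec_1:
  fixes M :: "(real^'d) measure"
  assumes "prob_space M" "sets M = sets borel" and "cdf_vec M (\<chi> j. 1) = 1"
  shows "AE y in M. \<forall>j. y$j \<le> 1"
proof -
  interpret prob_space M by fact
  have "{y. \<forall>j. y$j \<le> 1} \<in> sets M"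
    using assms(2) by (simp add: borel_closed closed_Collect_all closed_Collect_le continuous_intros)
  moreover have "prob {y. \<forall>j. y$j \<le> 1} = 1"
    using assms(3) by (simp add: cdf_vec_def)
  ultimately show ?thesis
    by (simp add: prob_eq_1)
qed

lemma measure_coordinate_le_eq_cdf_vec:
  fixes M :: "(real^'d) measure"
  assumes "sets M = sets borel" and "AE y in M. \<forall>i. y$i \<le> 1"
  shows "measure M {y. y$j \<le> a} = cdf_vec M (\<chi> i. if i = j then a else 1)"
  unfolding cdf_vec_def
proof (rule measure_eq_AE)
  show "AE y in M. y \<in> {y. y$j \<le> a} \<longleftrightarrow> y \<in> {y. \<forall>i. y$i \<le> (\<chi> i. if i = j then a else 1)$i}"
    using assms(2) by eventually_elim auto
qed (use assms(1) in \<open>simp_all add: borel_closed closed_Collect_all closed_Collect_le continuous_intros\<close>)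

lemma measure_coordinate_eq_0:
  fixes M :: "(real^'d) measure"
  assumes "prob_space M" "sets M = sets borel"
    and "0 < a" and uniform: "\<And>b. 0 < b \<Longrightarrow> b \<le> a \<Longrightarrow> measure M {y. y$j \<le> b} = b"
  shows "measure M {y. y$j = a} = 0"
proof -
  interpret prob_space M by fact
  have meas: "{y. y$j \<le> b} \<in> sets M" for b
    using assms(2) by (simp add: borel_closed closed_Collect_le continuous_intros)
  have "measure M {y. y$j = a} \<le> 0 + e" if "0 < e" for e
  proof -
    define e' where "e' = min e (a / 2)"
    have e': "0 < e'" "e' < a" "e' \<le> e"
      using that \<open>0 < a\<close> by (auto simp: e'_def)
    have "measure M {y. y$j = a} \<le> measure M ({y. y$j \<le> a} - {y. y$j \<le> a - e'})"
      using e' by (intro finite_measure_mono) (auto intro!: sets.Diff meas)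
    also have "\<dots> = measure M {y. y$j \<le> a} - measure M {y. y$j \<le> a - e'}"
      using e' by (intro finite_measure_Diff) (auto intro!: meas)
    also have "\<dots> = e'"
      using e' \<open>0 < a\<close> by (simp add: uniform)
    finally show ?thesis
      using e' by simp
  qed
  then show ?thesis
    by (meson field_le_epsilon measure_nonneg order_antisym)
qed

lemma measure_ge_inclusion_exclusion:
  fixes M :: "(real^'d) measure" and a :: "'d \<Rightarrow> real"
  assumes "prob_space M" "sets M = sets borel"
    and le_1: "AE y in M. \<forall>j. y$j \<le> 1" and no_atom: "\<And>j. measure M {y. y$j = a j} = 0"
  shows "measure M {y. \<forall>j. a j \<le> y$j}
       = 1 - (\<Sum>B | B \<subseteq> UNIV \<and> B \<noteq> {}. (-1) ^ (card B + 1) * cdf_vec M (\<chi> j. if j \<in> B then a j else 1))"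
proof -
  interpret prob_space M by fact
  have open_sets: "S \<in> sets M" if "open S" for S
    using assms(2) that by (simp add: borel_open)
  have closed_sets: "S \<in> sets M" if "closed S" for S
    using assms(2) that by (simp add: borel_closed)
  define X where "X j = {y. y$j < a j}" for j
  have X_open: "open (X j)" for j
    unfolding X_def by (intro open_Collect_less continuous_intros)
  have "AE y in M. y$j \<noteq> a j" for j
    using no_atom[of j] by (subst (asm) prob_eq_0) (auto intro!: closed_sets closed_Collect_eq continuous_intros)
  then have "AE y in M. \<forall>j. y$j \<noteq> a j"
    using AE_finite_allI[of UNIV "\<lambda>j y. y$j \<noteq> a j" M] by simp
  (* so the strict orthants of the union below agree a.e. with the closed ones of the cdf *)
  with le_1 have ae: "AE y in M. \<forall>j. y$j \<le> 1 \<and> y$j \<noteq> a j"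
    by eventually_elim auto
  interpret Incl_Excl "\<lambda>S. S \<in> sets M" "measure M"
    by unfold_locales (auto simp: disjnt_def intro: finite_measure_Union)
  have Int_X: "measure M (\<Inter>j\<in>B. X j) = cdf_vec M (\<chi> j. if j \<in> B then a j else 1)" for B
    unfolding cdf_vec_def
  proof (rule measure_eq_AE)
    show "AE y in M. y \<in> (\<Inter>j\<in>B. X j) \<longleftrightarrow> y \<in> {y. \<forall>j. y$j \<le> (\<chi> j. if j \<in> B then a j else 1)$j}"
      using ae by eventually_elim (auto simp: X_def order.order_iff_strict)
    show "(\<Inter>j\<in>B. X j) \<in> sets M"
      by (intro open_sets open_INT) (auto simp: X_open)
    show "{y. \<forall>j. y$j \<le> (\<chi> j. if j \<in> B then a j else 1)$j} \<in> sets M"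
      by (intro closed_sets closed_Collect_all closed_Collect_le continuous_intros)
  qed
  have "{y. \<forall>j. a j \<le> y$j} = space M - (\<Union>j. X j)"
    using sets_eq_imp_space_eq[OF assms(2)] by (auto simp: X_def not_less dest: leD)
  then have "measure M {y. \<forall>j. a j \<le> y$j} = 1 - measure M (\<Union>j. X j)"
    by (simp add: prob_compl open_sets open_UN X_open)
  also have "measure M (\<Union>j. X j) = (\<Sum>B | B \<subseteq> UNIV \<and> B \<noteq> {}. (-1) ^ (card B + 1) * measure M (\<Inter>j\<in>B. X j))"
    by (rule restricted_indexed) (auto intro!: open_sets X_open)
  finally show ?thesis
    by (simp add: Int_X)
qed

lemma survival_cdf_inclusion_exclusion:
  fixes M :: "(real^'d) measure" and u :: "real^'d"
  assumes "prob_space M" "sets M = sets borel"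
    and margins: "\<And>j a. 0 \<le> a \<Longrightarrow> a \<le> 1 \<Longrightarrow> cdf_vec M (\<chi> i. if i = j then a else 1) = a"
    and u: "\<forall>j. 0 \<le> u$j \<and> u$j < 1"
  shows "survival_cdf M u
       = 1 - (\<Sum>B | B \<subseteq> UNIV \<and> B \<noteq> {}. (-1) ^ (card B + 1) * cdf_vec M (\<chi> j. if j \<in> B then 1 - u$j else 1))"
proof -
  have "cdf_vec M (\<chi> j. 1) = 1"
    using margins[of 1 undefined] by simp
  then have le_1: "AE y in M. \<forall>j. y$j \<le> 1"
    by (rule AE_le_1_if_cdf_vec_1[OF assms(1,2)])
  have uniform: "measure M {y. y$j \<le> b} = b" if "0 \<le> b" "b \<le> 1" for j b
    using measure_coordinate_le_eq_cdf_vec[OF assms(2) le_1] margins that by simp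
  have "measure M {y. y$j = 1 - u$j} = 0" for j
  proof (rule measure_coordinate_eq_0[OF assms(1,2)])
    show "0 < 1 - u$j"
      using u by simp
    show "measure M {y. y$j \<le> b} = b" if "0 < b" "b \<le> 1 - u$j" for b
      using spec[OF u, of j] that by (intro uniform) auto
  qed
  then have "measure M {y. \<forall>j. 1 - u$j \<le> y$j}
       = 1 - (\<Sum>B | B \<subseteq> UNIV \<and> B \<noteq> {}. (-1) ^ (card B + 1) * cdf_vec M (\<chi> j. if j \<in> B then 1 - u$j else 1))"
    by (intro measure_ge_inclusion_exclusion[OF assms(1,2) le_1])
  moreover have "{y. \<forall>j. 1 - y$j \<le> u$j} = {y. \<forall>j. 1 - u$j \<le> y$j}"
    by (auto simp: algebra_simps)
  ultimately show ?thesis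
    by (simp add: survival_cdf_def)
qed

section \<open>The Marshall-Olkin copula\<close>

lemma MO_copula_margin:
  fixes \<alpha> :: "real^'d"
  assumes "0 \<le> \<alpha>$j" "\<alpha>$j \<le> 1" "0 \<le> a" "a \<le> 1"
  shows "MO_copula \<alpha> (\<chi> i. if i = j then a else 1) = a"
proof (cases "a = 0")
  case False
  have "(\<Prod>i\<in>UNIV. (\<chi> i. if i = j then a else 1)$i powr (1 - \<alpha>$i))
      = (\<Prod>i\<in>UNIV. if i = j then a powr (1 - \<alpha>$j) else 1)"
    by (intro prod.cong) auto
  then have "(\<Prod>i\<in>UNIV. (\<chi> i. if i = j then a else 1)$i powr (1 - \<alpha>$i)) = a powr (1 - \<alpha>$j)"
    by simp
  moreover have "Min (range (\<lambda>i. (\<chi> i. if i = j then a else 1)$i powr \<alpha>$i)) = a powr \<alpha>$j"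
  proof (rule Min_eqI)
    have "a powr \<alpha>$j \<le> 1"
      using assms by (intro powr_le1) auto
    then show "z \<ge> a powr \<alpha>$j" if "z \<in> range (\<lambda>i. (\<chi> i. if i = j then a else 1)$i powr \<alpha>$i)" for z
      using that by auto
  qed (auto intro: range_eqI[of _ _ j])
  ultimately show ?thesis
    using False assms by (simp add: MO_copula_def flip: powr_add)
qed (simp add: MO_copula_def prod_zero)

lemma MO_copula_slope:
  fixes \<alpha> c :: "real^'d"
  shows "((\<lambda>t. (MO_copula \<alpha> (\<chi> j. 1 - t * c$j) - 1) / t)
           \<longlongrightarrow> - ((\<Sum>j\<in>UNIV. (1 - \<alpha>$j) * c$j) + Max (range (\<lambda>j. \<alpha>$j * c$j)))) (at_right 0)"
proof -
  have "Min (range (\<lambda>j. - (\<alpha>$j * c$j))) = - Max (range (\<lambda>j. \<alpha>$j * c$j))"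
    by (simp add: image_image)
  moreover have "((\<lambda>t. (MO_copula \<alpha> (\<chi> j. 1 - t * c$j) - 1) / t)
           \<longlongrightarrow> (\<Sum>j\<in>UNIV. - ((1 - \<alpha>$j) * c$j)) + Min (range (\<lambda>j. - (\<alpha>$j * c$j)))) (at_right 0)"
    unfolding MO_copula_def vec_lambda_beta by (intro slope_mult slope_prod slope_Min slope_powr) auto
  ultimately show ?thesis
    by (simp add: sum_negf)
qed

lemma MO_copula_face_slope:
  fixes \<alpha> x :: "real^'d"
  assumes alpha: "\<forall>j. 0 \<le> \<alpha>$j" and x: "\<forall>j. 0 \<le> x$j" and "B \<noteq> {}"
  shows "((\<lambda>t. (1 - MO_copula \<alpha> (\<chi> j. if j \<in> B then 1 - t * x$j else 1)) / t)
           \<longlongrightarrow> (\<Sum>j\<in>B. (1 - \<alpha>$j) * x$j) + Max ((\<lambda>j. \<alpha>$j * x$j) ` B)) (at_right 0)"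
proof -
  define c where "c = (\<chi> j. if j \<in> B then x$j else 0)"
  have "(\<chi> j. if j \<in> B then 1 - t * x$j else 1) = (\<chi> j. 1 - t * c$j)" for t
    by (simp add: c_def vec_eq_iff)
  moreover have "(\<Sum>j\<in>UNIV. (1 - \<alpha>$j) * c$j) = (\<Sum>j\<in>B. (1 - \<alpha>$j) * x$j)"
    by (simp add: c_def if_distrib sum.If_cases)
  moreover have "Max (range (\<lambda>j. \<alpha>$j * c$j)) = Max ((\<lambda>j. \<alpha>$j * x$j) ` B)"
  proof (rule Max_eqI)
    have "Max ((\<lambda>j. \<alpha>$j * x$j) ` B) \<in> (\<lambda>j. \<alpha>$j * x$j) ` B"
      using \<open>B \<noteq> {}\<close> by simp
    then obtain k where k: "k \<in> B" "\<alpha>$k * x$k = Max ((\<lambda>j. \<alpha>$j * x$j) ` B)"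
      by auto
    then show "Max ((\<lambda>j. \<alpha>$j * x$j) ` B) \<in> range (\<lambda>j. \<alpha>$j * c$j)"
      by (auto simp: c_def intro!: range_eqI[of _ _ k])
    have "0 \<le> Max ((\<lambda>j. \<alpha>$j * x$j) ` B)"
      using alpha x by (simp flip: k(2))
    then show "z \<le> Max ((\<lambda>j. \<alpha>$j * x$j) ` B)" if "z \<in> range (\<lambda>j. \<alpha>$j * c$j)" for z
      using that by (auto simp: c_def)
  qed simp
  ultimately show ?thesis
    using tendsto_minus[OF MO_copula_slope[of \<alpha> c]] by (simp add: minus_divide_left add.commute)
qed

lemma MO_survival_cdf_eq:
  fixes \<alpha> u :: "real^'d" and M :: "(real^'d) measure"
  assumes alpha: "\<forall>j. 0 \<le> \<alpha>$j \<and> \<alpha>$j \<le> 1"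
    and prob: "prob_space M" and sets: "sets M = sets borel"
    and law: "\<forall>u\<in>unit_cube. cdf_vec M u = MO_copula \<alpha> u"
    and u: "\<forall>j. 0 \<le> u$j \<and> u$j < 1"
  shows "survival_cdf M u
       = (\<Sum>B | B \<subseteq> UNIV \<and> B \<noteq> {}. (-1) ^ (card B + 1) * (1 - MO_copula \<alpha> (\<chi> j. if j \<in> B then 1 - u$j else 1)))"
proof -
  let ?s = "\<lambda>B::'d set. (-1::real) ^ (card B + 1)"
  let ?C = "\<lambda>B. MO_copula \<alpha> (\<chi> j. if j \<in> B then 1 - u$j else 1)"
  have margins: "cdf_vec M (\<chi> i. if i = j then a else 1) = a" if "0 \<le> a" "a \<le> 1" for j a
    using that alpha law by (simp add: unit_cube_def MO_copula_margin)
  have "cdf_vec M (\<chi> j. if j \<in> B then 1 - u$j else 1) = ?C B" for B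
    using u law by (simp add: unit_cube_def less_imp_le)
  then have "survival_cdf M u = 1 - (\<Sum>B | B \<subseteq> UNIV \<and> B \<noteq> {}. ?s B * ?C B)"
    using u by (simp add: survival_cdf_inclusion_exclusion[OF prob sets margins])
  also have "\<dots> = (\<Sum>B | B \<subseteq> UNIV \<and> B \<noteq> {}. ?s B) - (\<Sum>B | B \<subseteq> UNIV \<and> B \<noteq> {}. ?s B * ?C B)"
    by (subst sum_alternating_nonempty_subsets) auto
  also have "\<dots> = (\<Sum>B | B \<subseteq> UNIV \<and> B \<noteq> {}. ?s B * (1 - ?C B))"
    by (simp only: right_diff_distrib mult_1_right sum_subtractf)
  finally show ?thesis .
qed

lemma MO_survival_tail_limit:
  fixes \<alpha> x :: "real^'d" and M :: "(real^'d) measure"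
  assumes d2: "CARD('d) \<ge> 2"
    and alpha: "\<forall>j. 0 \<le> \<alpha>$j \<and> \<alpha>$j \<le> 1"
    and prob: "prob_space M" and sets: "sets M = sets borel"
    and law: "\<forall>u\<in>unit_cube. cdf_vec M u = MO_copula \<alpha> u"
    and x: "\<forall>j. 0 \<le> x$j"
  shows "((\<lambda>t. survival_cdf M (t *\<^sub>R x) / t) \<longlongrightarrow> Min (range (\<lambda>j. \<alpha>$j * x$j))) (at_right 0)"
proof -
  let ?s = "\<lambda>B::'d set. (-1::real) ^ (card B + 1)"
  let ?Q = "\<lambda>B t. (1 - MO_copula \<alpha> (\<chi> j. if j \<in> B then 1 - t * x$j else 1)) / t"
  let ?L = "\<lambda>B. (\<Sum>j\<in>B. (1 - \<alpha>$j) * x$j) + Max ((\<lambda>j. \<alpha>$j * x$j) ` B)"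
  have "\<forall>\<^sub>F t in at_right 0. \<forall>j. t * x$j < 1"
  proof (intro eventually_all_finite allI)
    fix j
    have "((\<lambda>t. t * x$j) \<longlongrightarrow> 0 * x$j) (at_right 0)"
      by (intro tendsto_intros)
    then show "\<forall>\<^sub>F t in at_right 0. t * x$j < 1"
      by (rule order_tendstoD) simp
  qed
  then have "\<forall>\<^sub>F t in at_right 0. survival_cdf M (t *\<^sub>R x) / t = (\<Sum>B | B \<subseteq> UNIV \<and> B \<noteq> {}. ?s B * ?Q B t)"
    using eventually_at_right_less[of "0::real"]
  proof eventually_elim
    case (elim t)
    have "(\<chi> j. if j \<in> B then 1 - (t *\<^sub>R x)$j else 1) = (\<chi> j. if j \<in> B then 1 - t * x$j else 1)" for B
      by (simp add: vec_eq_iff)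
    moreover have "\<forall>j. 0 \<le> (t *\<^sub>R x)$j \<and> (t *\<^sub>R x)$j < 1"
      using elim x by simp
    ultimately show ?case
      by (simp add: MO_survival_cdf_eq[OF alpha prob sets law] sum_divide_distrib)
  qed
  moreover have "((\<lambda>t. \<Sum>B | B \<subseteq> UNIV \<and> B \<noteq> {}. ?s B * ?Q B t)
      \<longlongrightarrow> (\<Sum>B | B \<subseteq> UNIV \<and> B \<noteq> {}. ?s B * ?L B)) (at_right 0)"
    using alpha x by (intro tendsto_sum tendsto_mult tendsto_const MO_copula_face_slope) auto
  moreover have "(\<Sum>B | B \<subseteq> UNIV \<and> B \<noteq> {}. ?s B * ?L B) = Min (range (\<lambda>j. \<alpha>$j * x$j))"
  proof -
    have "(\<Sum>B | B \<subseteq> UNIV \<and> B \<noteq> {}. ?s B * (\<Sum>j\<in>B. (1 - \<alpha>$j) * x$j)) = 0"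
      using d2 by (intro sum_alternating_nonempty_subsets_sum) auto
    moreover have "Min (range (\<lambda>j. \<alpha>$j * x$j)) = (\<Sum>B | B \<subseteq> UNIV \<and> B \<noteq> {}. ?s B * Max ((\<lambda>j. \<alpha>$j * x$j) ` B))"
      by (rule Min_eq_alternating_sum_Max) auto
    ultimately show ?thesis
      by (simp only: distrib_left sum.distrib add_0_left)
  qed
  ultimately show ?thesis
    by (simp add: tendsto_cong)
qed

section \<open>Minima of scaled points of calB\<close>

lemma prod_powr_inverse_card_power:
  fixes f :: "'i \<Rightarrow> real"
  assumes "finite I" "I \<noteq> {}" "\<forall>i\<in>I. 0 \<le> f i"
  shows "(\<Prod>i\<in>I. f i powr (1 / card I)) ^ card I = (\<Prod>i\<in>I. f i)"
proof -
  have "card I > 0"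
    using assms by (simp add: card_gt_0_iff)
  moreover have "(\<Prod>i\<in>I. f i) \<ge> 0"
    using assms by (simp add: prod_nonneg)
  ultimately show ?thesis
    by (simp flip: prod_powr_distrib powr_realpow' add: powr_powr)
qed

lemma Min_power_card_le_prod:
  fixes y :: "'i \<Rightarrow> real"
  assumes "finite I" "I \<noteq> {}" "\<forall>i\<in>I. 0 \<le> y i"
  shows "Min (y ` I) ^ card I \<le> (\<Prod>i\<in>I. y i)"
proof -
  have "Min (y ` I) ^ card I = (\<Prod>i\<in>I. Min (y ` I))"
    by simp
  also have "\<dots> \<le> (\<Prod>i\<in>I. y i)"
    using assms by (intro prod_mono) auto
  finally show ?thesis .
qed

lemma Min_power_card_eq_prod_imp_eq:
  fixes y :: "'i \<Rightarrow> real"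
  assumes "finite I" "\<forall>i\<in>I. 0 < y i" "Min (y ` I) ^ card I = (\<Prod>i\<in>I. y i)" "i \<in> I"
  shows "y i = Min (y ` I)"
proof (rule ccontr)
  assume "y i \<noteq> Min (y ` I)"
  then have "Min (y ` I) < y i"
    using assms by (simp add: order.not_eq_order_implies_strict)
  moreover have "0 \<le> Min (y ` I)"
    using assms(1,2,4) by (subst Min_ge_iff) (auto simp: less_imp_le)
  ultimately have "(\<Prod>i\<in>I. Min (y ` I)) < (\<Prod>i\<in>I. y i)"
    using assms by (intro prod_mono_strict[of i]) auto
  then show False
    using assms(3) by simp
qed

lemma prod_scaled_calB:
  fixes \<alpha> b :: "real^'d"
  assumes "b \<in> calB"
  shows "(\<Prod>j\<in>UNIV. \<alpha>$j * b$j) = (\<Prod>j\<in>UNIV. \<alpha>$j)"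
  using assms by (simp add: calB_def prod.distrib)

lemma geometric_mean_power_card:
  fixes \<alpha> :: "real^'d"
  assumes "\<forall>j. 0 < \<alpha>$j"
  shows "(\<Prod>j\<in>UNIV. \<alpha>$j powr (1 / CARD('d))) ^ CARD('d) = (\<Prod>j\<in>UNIV. \<alpha>$j)"
  using assms by (intro prod_powr_inverse_card_power) (auto simp: less_imp_le)

lemma Min_scaled_le_geometric_mean:
  fixes \<alpha> b :: "real^'d"
  assumes \<alpha>: "\<forall>j. 0 < \<alpha>$j" and b: "b \<in> calB"
  shows "Min (range (\<lambda>j. \<alpha>$j * b$j)) \<le> (\<Prod>j\<in>UNIV. \<alpha>$j powr (1 / CARD('d)))"
proof -
  have "Min (range (\<lambda>j. \<alpha>$j * b$j)) ^ CARD('d) \<le> (\<Prod>j\<in>UNIV. \<alpha>$j * b$j)"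
    using \<alpha> b by (intro Min_power_card_le_prod) (auto simp: calB_def less_imp_le)
  then have "Min (range (\<lambda>j. \<alpha>$j * b$j)) ^ CARD('d) \<le> (\<Prod>j\<in>UNIV. \<alpha>$j powr (1 / CARD('d))) ^ CARD('d)"
    using \<alpha> b by (simp add: prod_scaled_calB geometric_mean_power_card)
  moreover have "0 \<le> Min (range (\<lambda>j. \<alpha>$j * b$j))"
    using \<alpha> b by (auto simp: calB_def less_imp_le)
  ultimately show ?thesis
    by (simp add: prod_nonneg)
qed

lemma Min_scaled_eq_geometric_mean_iff:
  fixes \<alpha> b :: "real^'d"
  defines "G \<equiv> \<Prod>j\<in>UNIV. \<alpha>$j powr (1 / CARD('d))"
  assumes \<alpha>: "\<forall>j. 0 < \<alpha>$j" and b: "b \<in> calB"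
  shows "Min (range (\<lambda>j. \<alpha>$j * b$j)) = G \<longleftrightarrow> b = (\<chi> j. G / \<alpha>$j)"
proof
  assume Min_eq: "Min (range (\<lambda>j. \<alpha>$j * b$j)) = G"
  have pos: "\<forall>j\<in>UNIV. 0 < \<alpha>$j * b$j"
    using \<alpha> b by (simp add: calB_def)
  have "Min (range (\<lambda>j. \<alpha>$j * b$j)) ^ CARD('d) = (\<Prod>j\<in>UNIV. \<alpha>$j * b$j)"
    using \<alpha> b by (simp add: Min_eq G_def prod_scaled_calB geometric_mean_power_card)
  then have "\<alpha>$j * b$j = G" for j
    using Min_power_card_eq_prod_imp_eq[OF finite pos] Min_eq by simp
  moreover have "\<alpha>$j \<noteq> 0" for j
    using \<alpha> by (metis less_irrefl)
  ultimately show "b = (\<chi> j. G / \<alpha>$j)"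
    by (auto simp: vec_eq_iff field_simps)
next
  assume "b = (\<chi> j. G / \<alpha>$j)"
  moreover have "\<alpha>$j \<noteq> 0" for j
    using \<alpha> by (metis less_irrefl)
  ultimately have "range (\<lambda>j. \<alpha>$j * b$j) = {G}"
    by auto
  then show "Min (range (\<lambda>j. \<alpha>$j * b$j)) = G"
    by simp
qed

lemma geometric_mean_scaled_in_calB:
  fixes \<alpha> :: "real^'d"
  assumes "\<forall>j. 0 < \<alpha>$j"
  shows "(\<chi> j. (\<Prod>i\<in>UNIV. \<alpha>$i powr (1 / CARD('d))) / \<alpha>$j) \<in> calB"
proof -
  have "\<alpha>$j \<noteq> 0" for j
    using assms by (metis less_irrefl)
  then show ?thesis
    using assms by (simp add: calB_def prod_dividef geometric_mean_power_card prod_pos)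
qed

theorem proposition3p2:
  fixes \<alpha> :: "real^'d" and M :: "(real^'d) measure"
  assumes d2: "CARD('d) \<ge> 2"
    and alpha: "\<forall>j. 0 < \<alpha>$j \<and> \<alpha>$j < 1"
    and prob: "prob_space M" and sets: "sets M = sets borel"
    and law: "\<forall>u\<in>unit_cube. cdf_vec M u = MO_copula \<alpha> u"
  shows "(\<forall>x. (\<forall>j. 0 < x$j) \<longrightarrow>
            ((\<lambda>t. survival_cdf M (t *\<^sub>R x) / t) \<longlongrightarrow> Min (range (\<lambda>j. \<alpha>$j * x$j))) (at_right 0))
       \<and> max_tail_concordance (survival_cdf M) = (\<Prod>j\<in>UNIV. \<alpha>$j powr (1 / real CARD('d)))
       \<and> (let bstar = (\<chi> j. (\<Prod>i\<in>UNIV. \<alpha>$i powr (1 / real CARD('d))) / \<alpha>$j) in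
            bstar \<in> calB
            \<and> tail_copula (survival_cdf M) bstar = max_tail_concordance (survival_cdf M)
            \<and> (\<forall>b\<in>calB. tail_copula (survival_cdf M) b = max_tail_concordance (survival_cdf M) \<longrightarrow> b = bstar))"
proof -
  define G where "G = (\<Prod>j\<in>UNIV. \<alpha>$j powr (1 / real CARD('d)))"
  define bstar where "bstar = (\<chi> j. G / \<alpha>$j)"
  have \<alpha>_pos: "\<forall>j. 0 < \<alpha>$j"
    using alpha by simp
  have limit: "((\<lambda>t. survival_cdf M (t *\<^sub>R x) / t) \<longlongrightarrow> Min (range (\<lambda>j. \<alpha>$j * x$j))) (at_right 0)"
    if "\<forall>j. 0 < x$j" for x
    using alpha that by (intro MO_survival_tail_limit[OF d2 _ prob sets law]) (auto simp: less_imp_le)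
  have tail: "tail_copula (survival_cdf M) b = Min (range (\<lambda>j. \<alpha>$j * b$j))" if "b \<in> calB" for b
    using that limit unfolding tail_copula_def calB_def by (intro tendsto_Lim) auto
  have bstar_in: "bstar \<in> calB"
    using geometric_mean_scaled_in_calB[OF \<alpha>_pos] by (simp add: G_def bstar_def)
  have tail_iff: "tail_copula (survival_cdf M) b = G \<longleftrightarrow> b = bstar" if "b \<in> calB" for b
    using Min_scaled_eq_geometric_mean_iff[OF \<alpha>_pos that] tail[OF that] by (simp add: G_def bstar_def)
  have "max_tail_concordance (survival_cdf M) = G"
    unfolding max_tail_concordance_def
    using bstar_in tail_iff tail Min_scaled_le_geometric_mean[OF \<alpha>_pos]
    by (intro cSup_eq_maximum) (force simp: G_def)+
  with bstar_in tail_iff limit show ?thesis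
    by (auto simp: Let_def G_def bstar_def)
qed

end
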